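(* A set $\Gamma\subset\mathbb{C}$ is of the form $f(\mathbb{R})$ for some nonconstant delta-monotone map $f\colon\mathbb{C}\to\mathbb{C}$ if and only if $\Gamma$ is a Lipschitz graph, i.e. $\Gamma=\{x+ig(x)\colon x\in\mathbb{R}\}$ for some Lipschitz function $g\colon\mathbb{R}\to\mathbb{R}$ (equivalently, the projection $w\mapsto\operatorname{Re}w$ is a bi-Lipschitz map of $\Gamma$ onto $\mathbb{R}$).
   Context: A map $f\colon\mathbb{C}\to\mathbb{C}$ is delta-monotone if there exists $\delta>0$ such that $\operatorname{Re}\frac{f(z)-f(\zeta)}{z-\zeta}\ge\delta\frac{|f(z)-f(\zeta)|}{|z-\zeta|}$ for all distinct $z,\zeta\in\mathbb{C}$. *)

theory Defs
  imports "HOL-Analysis.Analysis"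
begin

definition delta_monotone :: "(complex \<Rightarrow> complex) \<Rightarrow> bool" where
  "delta_monotone f \<longleftrightarrow> (\<exists>\<delta>>0. \<forall>z \<zeta>. z \<noteq> \<zeta> \<longrightarrow>
      Re ((f z - f \<zeta>) / (z - \<zeta>)) \<ge> \<delta> * (cmod (f z - f \<zeta>) / cmod (z - \<zeta>)))"

end

theory Submission
  imports Defs
begin

(* Delta-monotonicity says that f maps every increment p - q to a vector
   whose angle with p - q has cosine at least \<delta> ("cone condition").  Using only this we
   show, for nonconstant f and u x = Re (f x) on the real axis:
   (1) u is nondecreasing, and |f x - f y| \<le> |u x - u y| / \<delta>;
   (2) u is continuous: radial limits of f exist and agree for nearby directions, so by a
       chain of directions along the unit circle the left and right limits coincide;
   (3) u is unbounded in both directions: otherwise the limit of f along a ray spreads, by the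
       same chaining argument, to rays in the opposite direction and forces f to be constant.
   Hence u maps the reals onto the reals, and f(\<real>) is the graph of the function
   s \<mapsto> Im (f x) for u x = s, which is 1/\<delta>-Lipschitz by (1).  For an L-Lipschitz g, the shear x + i y \<mapsto> x + i (g x + (L^2 + 1) y)
   is delta-monotone and maps the real axis onto the graph of g. *)

(* in_cone \<delta> w d: the angle between w and the direction d has cosine at least \<delta>
   (trivially true when w = 0 or d = 0). *)
definition in_cone :: "real \<Rightarrow> complex \<Rightarrow> complex \<Rightarrow> bool" where
  "in_cone \<delta> w d \<longleftrightarrow> \<delta> * cmod w * cmod d \<le> Re (w * cnj d)"

lemma in_cone_zero [simp]: "in_cone \<delta> 0 d" "in_cone \<delta> w 0"
  by (auto simp: in_cone_def)

lemma Re_divide_by_cnj: "Re (w / d) = Re (w * cnj d) / (cmod d)^2"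
  by (subst complex_div_cnj) (simp add: Re_divide_of_real power2_eq_square del: of_real_power)

lemma in_cone_iff_Re_quotient:
  assumes "d \<noteq> 0"
  shows "in_cone \<delta> w d \<longleftrightarrow> \<delta> * (cmod w / cmod d) \<le> Re (w / d)"
proof -
  have pos: "(cmod d)^2 > 0" using assms by simp
  have "\<delta> * (cmod w / cmod d) = \<delta> * cmod w * cmod d / (cmod d)^2"
    using assms by (simp add: power2_eq_square)
  then show ?thesis
    unfolding in_cone_def Re_divide_by_cnj by (simp only: divide_le_cancel) (use pos in auto)
qed

lemma delta_monotone_iff_in_cone:
  "delta_monotone f \<longleftrightarrow> (\<exists>\<delta>>0. \<forall>p q. in_cone \<delta> (f p - f q) (p - q))"
proof -
  have "in_cone \<delta> (f p - f q) (p - q) \<longleftrightarrow>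
      (p \<noteq> q \<longrightarrow> \<delta> * (cmod (f p - f q) / cmod (p - q)) \<le> Re ((f p - f q) / (p - q)))" for \<delta> p q
    using in_cone_iff_Re_quotient[of "p - q" \<delta> "f p - f q"] by (cases "p = q") auto
  then show ?thesis unfolding delta_monotone_def by simp
qed

lemma in_cone_neg_iff: "in_cone \<delta> (-w) (-d) \<longleftrightarrow> in_cone \<delta> w d"
  by (simp add: in_cone_def)

lemma in_cone_scale_iff:
  assumes "c > 0"
  shows "in_cone \<delta> w (of_real c * d) \<longleftrightarrow> in_cone \<delta> w d"
proof -
  have "Re (w * cnj (of_real c * d)) = c * Re (w * cnj d)" by (simp add: algebra_simps)
  moreover have "cmod (of_real c * d) = c * cmod d" using assms by (simp add: norm_mult)
  ultimately show ?thesis using assms unfolding in_cone_def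
    by (metis (no_types, opaque_lifting) mult.left_commute mult_le_cancel_left_pos)
qed

lemma in_cone_Re_nonneg: "\<delta> \<ge> 0 \<Longrightarrow> in_cone \<delta> w d \<Longrightarrow> Re (w * cnj d) \<ge> 0"
  unfolding in_cone_def by (meson mult_nonneg_nonneg norm_ge_zero order_trans)

lemma in_cone_two_directions:
  assumes "in_cone \<delta> w d1" "in_cone \<delta> w d2" "cmod d1 = 1" "cmod d2 = 1"
    and "cmod (d1 + d2) < 2 * \<delta>"
  shows "w = 0"
proof -
  have "2 * \<delta> * cmod w \<le> Re (w * cnj (d1 + d2))"
    using assms(1-4) unfolding in_cone_def by (simp add: algebra_simps)
  also have "\<dots> \<le> cmod w * cmod (d1 + d2)"
    using complex_Re_le_cmod[of "w * cnj (d1 + d2)"] by (simp add: norm_mult del: complex_cnj_add)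
  finally have "cmod w * (2 * \<delta> - cmod (d1 + d2)) \<le> 0" by (simp add: algebra_simps)
  with assms(5) show ?thesis by (simp add: mult_le_0_iff)
qed

(* Quantitative version: if a and b lie in such almost opposite cones, then a is
   controlled by a - b.  This bounds rays running between two cones. *)
lemma in_cone_two_directions_bound:
  assumes a: "in_cone \<delta> a d1" and b: "in_cone \<delta> b d2" and "cmod d1 = 1" "cmod d2 = 1"
    and gap: "cmod (d1 + d2) < 2 * \<delta>" and "\<delta> > 0"
  shows "cmod a \<le> (1 + \<delta>) * cmod (a - b) / (2 * \<delta> - cmod (d1 + d2))"
proof -
  have A: "\<delta> * cmod a \<le> Re (a * cnj d1)" using a \<open>cmod d1 = 1\<close> by (simp add: in_cone_def)
  have B: "\<delta> * cmod b \<le> Re (b * cnj d2)" using b \<open>cmod d2 = 1\<close> by (simp add: in_cone_def)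
  have "Re ((a - b) * cnj d2) \<ge> - cmod (a - b)"
    using abs_Re_le_cmod[of "(a - b) * cnj d2"] \<open>cmod d2 = 1\<close> by (simp add: norm_mult)
  moreover have "\<delta> * cmod b \<ge> \<delta> * (cmod a - cmod (a - b))"
    using norm_triangle_ineq[of b "a - b"] \<open>\<delta> > 0\<close> by (intro mult_left_mono) auto
  moreover have "Re (a * cnj d2) = Re (b * cnj d2) + Re ((a - b) * cnj d2)"
    by (simp add: algebra_simps)
  ultimately have C: "Re (a * cnj d2) \<ge> \<delta> * cmod a - (1 + \<delta>) * cmod (a - b)"
    using B by (simp add: algebra_simps)
  have "Re (a * cnj (d1 + d2)) \<le> cmod a * cmod (d1 + d2)"
    using complex_Re_le_cmod[of "a * cnj (d1 + d2)"] by (simp add: norm_mult del: complex_cnj_add)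
  then have "cmod a * (2 * \<delta> - cmod (d1 + d2)) \<le> (1 + \<delta>) * cmod (a - b)"
    using A C by (simp add: algebra_simps)
  then show ?thesis using gap by (simp add: field_simps)
qed

lemma in_cone_limit:
  assumes "a \<longlonglongrightarrow> A" "d \<longlonglongrightarrow> D" "\<And>n. in_cone \<delta> (a n) (d n)"
  shows "in_cone \<delta> A D"
proof -
  have "(\<lambda>n. \<delta> * cmod (a n) * cmod (d n)) \<longlonglongrightarrow> \<delta> * cmod A * cmod D"
    and "(\<lambda>n. Re (a n * cnj (d n))) \<longlonglongrightarrow> Re (A * cnj D)"
    by (intro tendsto_intros assms)+
  then show ?thesis
    using assms(3) unfolding in_cone_def by (intro tendsto_le[OF trivial_limit_sequentially]) auto
qed

lemma in_cone_limit_fixed_direction: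
  assumes "a \<longlonglongrightarrow> A" "\<And>n. in_cone \<delta> (a n) d"
  shows "in_cone \<delta> A d"
  using in_cone_limit[OF assms(1) tendsto_const assms(2)] .

(* If a n lies in the cone around c + n v, then lim a lies in the cone around v,
   since the directions (c + n v) / (n + 1) tend to v. *)
lemma in_cone_limit_asymptotic_direction:
  assumes "a \<longlonglongrightarrow> A" "\<And>n. in_cone \<delta> (a n) (c + of_nat n * v)"
  shows "in_cone \<delta> A v"
proof (rule in_cone_limit[OF assms(1)])
  have "(\<lambda>n. (c - v) / of_nat (Suc n) + v) \<longlonglongrightarrow> 0 + v"
    by (intro tendsto_add tendsto_const LIMSEQ_Suc[OF lim_const_over_n])
  moreover have "(c - v) / of_nat (Suc n) + v = of_real (inverse (Suc n)) * (c + of_nat n * v)" for n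
    by (simp add: field_simps del: of_nat_Suc) (simp add: algebra_simps)
  ultimately show "(\<lambda>n. of_real (inverse (Suc n)) * (c + of_nat n * v)) \<longlonglongrightarrow> v" by simp
  show "in_cone \<delta> (a n) (of_real (inverse (Suc n)) * (c + of_nat n * v))" for n
    using assms(2) in_cone_scale_iff[of "inverse (Suc n)"] by simp
qed

(* A sequence whose forward increments all lie in the cone around the unit vector u and
   whose u-component is bounded above converges: the u-component is increasing and
   controls the size of every increment. *)
lemma in_cone_chain_convergent:
  fixes F :: "nat \<Rightarrow> complex"
  assumes \<delta>: "\<delta> > 0" and u: "cmod u = 1"
    and chain: "\<And>n m. n \<le> m \<Longrightarrow> in_cone \<delta> (F m - F n) u"
    and bounded: "\<And>n. Re (F n * cnj u) \<le> B"
  shows "convergent F"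
proof -
  define h where "h n = Re (F n * cnj u)" for n
  have "incseq h"
  proof (rule incseq_SucI)
    fix n
    have "Re ((F (Suc n) - F n) * cnj u) \<ge> 0"
      using in_cone_Re_nonneg[OF _ chain[of n "Suc n"]] \<delta> by simp
    then show "h n \<le> h (Suc n)" by (simp add: h_def algebra_simps)
  qed
  moreover have "bdd_above (range h)" unfolding h_def by (rule bdd_aboveI2[of _ _ B]) (rule bounded)
  ultimately have "Cauchy h"
    using LIMSEQ_incseq_SUP convergent_Cauchy by (auto simp: convergent_def)
  have step: "cmod (F m - F n) \<le> \<bar>h m - h n\<bar> / \<delta>" for n m
  proof -
    have ordered: "cmod (F m - F n) \<le> (h m - h n) / \<delta>" if "n \<le> m" for n m
      using chain[OF that] u \<delta> by (simp add: in_cone_def h_def field_simps)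
    have "(h m - h n) / \<delta> \<le> \<bar>h m - h n\<bar> / \<delta>" "(h n - h m) / \<delta> \<le> \<bar>h m - h n\<bar> / \<delta>"
      using \<delta> by (simp_all add: divide_right_mono)
    moreover have "cmod (F m - F n) = cmod (F n - F m)" by (rule norm_minus_commute)
    ultimately show ?thesis
      by (cases "n \<le> m") (use ordered[of n m] ordered[of m n] in linarith)+
  qed
  have "Cauchy F"
  proof (rule metric_CauchyI)
    fix e :: real assume "e > 0"
    then obtain M where M: "\<And>m n. m \<ge> M \<Longrightarrow> n \<ge> M \<Longrightarrow> dist (h m) (h n) < e * \<delta>"
      using \<open>Cauchy h\<close> \<delta> unfolding Cauchy_def by (meson mult_pos_pos)
    have "dist (F m) (F n) < e" if "m \<ge> M" "n \<ge> M" for m n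
    proof -
      have "\<bar>h m - h n\<bar> / \<delta> < e" using M[OF that] \<delta> by (simp add: dist_real_def pos_divide_less_eq)
      then show ?thesis using step[of m n] by (simp add: dist_norm)
    qed
    then show "\<exists>M. \<forall>m\<ge>M. \<forall>n\<ge>M. dist (F m) (F n) < e" by blast
  qed
  then show ?thesis using Cauchy_convergent_iff by blast
qed

(* Connectedness of the unit circle in discrete form: a property passed on between unit
   vectors at distance < \<epsilon> propagates from 1 to -1 (along the upper half circle). *)
lemma unit_circle_chain:
  assumes \<epsilon>: "\<epsilon> > 0" and start: "Q 1"
    and step: "\<And>u v. cmod u = 1 \<Longrightarrow> cmod v = 1 \<Longrightarrow> cmod (v - u) < \<epsilon> \<Longrightarrow> Q u \<Longrightarrow> Q v"
  shows "Q (-1)"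
proof -
  have "isCont (\<lambda>t::real. exp (\<i> * of_real t)) 0" by (intro continuous_intros)
  then have "(\<lambda>t::real. exp (\<i> * of_real t)) \<midarrow>0\<rightarrow> 1" by (simp add: isCont_def)
  then obtain \<eta> where "\<eta> > 0"
    and close: "\<And>t::real. t \<noteq> 0 \<and> norm (t - 0) < \<eta> \<longrightarrow> norm (exp (\<i> * of_real t) - 1) < \<epsilon>"
    using \<epsilon> unfolding LIM_eq by blast
  obtain N :: nat where N: "pi / \<eta> < of_nat N" using reals_Archimedean2 by blast
  with \<open>\<eta> > 0\<close> have "N > 0" by (cases N) (auto simp: field_simps)
  define t where "t = pi / real N"
  have "0 < t" "t < \<eta>" using N \<open>\<eta> > 0\<close> \<open>N > 0\<close> by (simp_all add: t_def field_simps)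
  define c where "c k = exp (\<i> * of_real (real k * t))" for k :: nat
  have unit: "cmod (c k) = 1" for k by (simp add: c_def)
  have small_step: "cmod (c (Suc k) - c k) < \<epsilon>" for k
  proof -
    have "c (Suc k) - c k = c k * (exp (\<i> * of_real t) - 1)"
      by (simp add: c_def algebra_simps flip: exp_add)
    then have "cmod (c (Suc k) - c k) = cmod (exp (\<i> * of_real t) - 1)" by (simp add: norm_mult unit)
    also have "\<dots> < \<epsilon>" using close[of t] \<open>0 < t\<close> \<open>t < \<eta>\<close> by auto
    finally show ?thesis .
  qed
  have "Q (c k)" for k
  proof (induction k)
    case 0
    then show ?case using start by (simp add: c_def)
  next
    case (Suc k)
    then show ?case using step[OF unit unit small_step] by blast
  qed
  moreover have "c N = -1" using \<open>N > 0\<close> by (simp add: c_def t_def)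
  ultimately show ?thesis by metis
qed

definition radius :: "nat \<Rightarrow> real" where
  "radius n = inverse (real (Suc n))"

lemma radius_pos: "radius n > 0"
  by (simp add: radius_def)

lemma radius_tendsto_zero: "radius \<longlonglongrightarrow> 0"
  unfolding radius_def by (rule LIMSEQ_inverse_real_of_nat)

lemma radius_strict_decreasing: "n < m \<Longrightarrow> radius m < radius n"
  by (simp add: radius_def)

locale cone_map =
  fixes \<delta> :: real and f :: "complex \<Rightarrow> complex"
  assumes delta_pos: "\<delta> > 0"
    and cone: "\<And>p q. in_cone \<delta> (f p - f q) (p - q)"
begin

(* The map z \<mapsto> -f(-z) has the same property; this transfers statements about the
   positive real half-axis to the negative one. *)
lemma point_reflection: "cone_map \<delta> (\<lambda>z. - f (- z))"
proof
  fix p q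
  have "in_cone \<delta> (- ((- f (- p)) - (- f (- q)))) (- (p - q))"
    using cone[of "-p" "-q"] by simp
  then show "in_cone \<delta> ((- f (- p)) - (- f (- q))) (p - q)" by (simp only: in_cone_neg_iff)
qed (rule delta_pos)

lemma ray_in_cone:
  assumes "n \<le> m"
  shows "in_cone \<delta> (f (z + of_nat m * u) - f (z + of_nat n * u)) u"
proof (cases "n = m")
  case False
  then have pos: "real m - real n > 0" using assms by simp
  have "(z + of_nat m * u) - (z + of_nat n * u) = of_real (real m - real n) * u"
    by (simp add: algebra_simps)
  then show ?thesis using cone[of "z + of_nat m * u" "z + of_nat n * u"] in_cone_scale_iff[OF pos]
    by simp
qed simp

lemma ray_limits_coincide:
  assumes lim_v: "(\<lambda>n. f (z + of_nat n * v)) \<longlonglongrightarrow> Q"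
    and lim_u: "(\<lambda>n. f (w + of_nat n * u)) \<longlonglongrightarrow> P"
    and "cmod u = 1" "cmod v = 1" "cmod (v - u) < 2 * \<delta>"
  shows "Q = P"
proof -
  have cone_mn: "in_cone \<delta> (f (z + of_nat m * v) - f (w + of_nat n * u))
      ((z - w) + of_nat m * v + of_nat n * (- u))" for m n
    using cone[of "z + of_nat m * v" "w + of_nat n * u"] by (simp add: algebra_simps)
  have "in_cone \<delta> (Q - P) (-u)"
  proof (rule in_cone_limit_fixed_direction[of "\<lambda>m. f (z + of_nat m * v) - P"])
    show "(\<lambda>m. f (z + of_nat m * v) - P) \<longlonglongrightarrow> Q - P" using lim_v by (intro tendsto_intros)
    show "in_cone \<delta> (f (z + of_nat m * v) - P) (- u)" for m
    proof (rule in_cone_limit_asymptotic_direction)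
      show "(\<lambda>n. f (z + of_nat m * v) - f (w + of_nat n * u)) \<longlonglongrightarrow> f (z + of_nat m * v) - P"
        using lim_u by (intro tendsto_intros)
      show "in_cone \<delta> (f (z + of_nat m * v) - f (w + of_nat n * u))
          ((z - w) + of_nat m * v + of_nat n * (- u))" for n
        by (rule cone_mn)
    qed
  qed
  moreover have "in_cone \<delta> (Q - P) v"
  proof (rule in_cone_limit_fixed_direction[of "\<lambda>n. Q - f (w + of_nat n * u)"])
    show "(\<lambda>n. Q - f (w + of_nat n * u)) \<longlonglongrightarrow> Q - P" using lim_u by (intro tendsto_intros)
    show "in_cone \<delta> (Q - f (w + of_nat n * u)) v" for n
    proof (rule in_cone_limit_asymptotic_direction)
      show "(\<lambda>m. f (z + of_nat m * v) - f (w + of_nat n * u)) \<longlonglongrightarrow> Q - f (w + of_nat n * u)"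
        using lim_v by (intro tendsto_intros)
      show "in_cone \<delta> (f (z + of_nat m * v) - f (w + of_nat n * u))
          ((z - w) + of_nat n * (- u) + of_nat m * v)" for m
        using cone_mn[of m n] by (simp add: algebra_simps)
    qed
  qed
  ultimately show "Q = P" using in_cone_two_directions[of \<delta> "Q - P" v "-u"] assms(3-5) by simp
qed

lemma limit_along_rays_from_every_point:
  assumes lim: "(\<lambda>n. f (0 + of_nat n * 1)) \<longlonglongrightarrow> P"
  shows "(\<lambda>n. f (z + of_nat n * 1)) \<longlonglongrightarrow> P"
proof -
  define T where "T n = f (z + of_nat n * 1)" for n
  have T_below: "in_cone \<delta> (T n - P) (-1)" for n
  proof (rule in_cone_limit_asymptotic_direction[of "\<lambda>m. T n - f (0 + of_nat m * 1)" _ _ "z + of_nat n"])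
    show "(\<lambda>m. T n - f (0 + of_nat m * 1)) \<longlonglongrightarrow> T n - P" using lim by (intro tendsto_intros)
    show "in_cone \<delta> (T n - f (0 + of_nat m * 1)) (z + of_nat n + of_nat m * - 1)" for m
      using cone[of "z + of_nat n * 1" "of_nat m"] by (simp add: T_def algebra_simps)
  qed
  have "Re (T n * cnj 1) \<le> Re P" for n
    using in_cone_Re_nonneg[OF _ T_below[of n]] delta_pos by simp
  moreover have "\<And>n m. n \<le> m \<Longrightarrow> in_cone \<delta> (T m - T n) 1"
    unfolding T_def by (rule ray_in_cone)
  ultimately have "convergent T"
    by (intro in_cone_chain_convergent[OF delta_pos, of 1 T "Re P"]) auto
  then obtain Q where TQ: "T \<longlonglongrightarrow> Q" by (auto simp: convergent_def)
  moreover have "Q = P"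
    using ray_limits_coincide[of z 1 Q 0 1 P] TQ lim delta_pos unfolding T_def by simp
  ultimately show ?thesis unfolding T_def by simp
qed

(* A common limit P along all rays in direction u is also the limit along all rays in
   every nearby direction v: the ray in direction v is trapped between two cones and hence
   bounded, so it converges, and its limit is P by ray_limits_coincide. *)
lemma limit_along_nearby_direction:
  assumes lim_u: "\<And>z. (\<lambda>n. f (z + of_nat n * u)) \<longlonglongrightarrow> P"
    and u: "cmod u = 1" and v: "cmod v = 1" and close: "cmod (v - u) < 2 * \<delta>"
  shows "(\<lambda>n. f (z + of_nat n * v)) \<longlonglongrightarrow> P"
proof -
  define T where "T n = f (z + of_nat n * v)" for n
  have T_P: "in_cone \<delta> (T n - P) (-u)" for n
  proof -
    have "in_cone \<delta> (P - T n) u"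
    proof (rule in_cone_limit_asymptotic_direction[of _ _ _ 0])
      show "(\<lambda>m. f ((z + of_nat n * v) + of_nat m * u) - T n) \<longlonglongrightarrow> P - T n"
        using lim_u by (intro tendsto_diff tendsto_const)
      show "in_cone \<delta> (f (z + of_nat n * v + of_nat m * u) - T n) (0 + of_nat m * u)" for m
        using cone[of "z + of_nat n * v + of_nat m * u" "z + of_nat n * v"] by (simp add: T_def)
    qed
    then show ?thesis using in_cone_neg_iff[of \<delta> "T n - P" "-u"] by simp
  qed
  have T_start: "in_cone \<delta> (T n - f z) v" for n
    using ray_in_cone[of 0 n z v] by (simp add: T_def)
  have gap: "cmod (v + - u) < 2 * \<delta>" "cmod (-u) = 1" using close u by simp_all
  define K where "K = (1 + \<delta>) * cmod (P - f z) / (2 * \<delta> - cmod (v + - u))"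
  have bound: "cmod (T n - f z) \<le> K" for n
    using in_cone_two_directions_bound[OF T_start[of n] T_P[of n] v gap(2) gap(1) delta_pos]
    by (simp add: K_def)
  have "Re (T n * cnj v) \<le> cmod (f z) + K" for n
  proof -
    have "Re (T n * cnj v) \<le> cmod (T n * cnj v)" by (rule complex_Re_le_cmod)
    also have "\<dots> = cmod (T n)" using v by (simp add: norm_mult)
    also have "\<dots> \<le> cmod (f z) + cmod (T n - f z)" using norm_triangle_ineq[of "f z" "T n - f z"] by simp
    also have "\<dots> \<le> cmod (f z) + K" using bound[of n] by simp
    finally show ?thesis .
  qed
  moreover have "\<And>n m. n \<le> m \<Longrightarrow> in_cone \<delta> (T m - T n) v"
    unfolding T_def by (rule ray_in_cone)
  ultimately have "convergent T" by (intro in_cone_chain_convergent[OF delta_pos v])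
  then obtain Q where TQ: "T \<longlonglongrightarrow> Q" by (auto simp: convergent_def)
  moreover have "Q = P"
    using ray_limits_coincide[of z v Q z u P] TQ lim_u u v close unfolding T_def by blast
  ultimately show ?thesis unfolding T_def by simp
qed

(* The limit along the positive axis is propagated by unit_circle_chain to the direction -1,
   so every value f z lies in opposite cones around that limit. *)
lemma constant_if_bounded_on_naturals:
  assumes bounded: "\<And>n::nat. Re (f (of_nat n)) \<le> M"
  shows "\<exists>c. \<forall>z. f z = c"
proof -
  have "convergent (\<lambda>n. f (0 + of_nat n * 1))"
    by (rule in_cone_chain_convergent[OF delta_pos _ ray_in_cone, where B = M]) (simp_all add: bounded)
  then obtain P where lim: "(\<lambda>n. f (0 + of_nat n * 1)) \<longlonglongrightarrow> P" by (auto simp: convergent_def)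
  define Q where "Q u \<longleftrightarrow> (\<forall>z. (\<lambda>n. f (z + of_nat n * u)) \<longlonglongrightarrow> P)" for u
  have "Q 1" using limit_along_rays_from_every_point[OF lim] by (simp add: Q_def)
  have "Q (-1)"
  proof (rule unit_circle_chain[of "2 * \<delta>" Q])
    show "2 * \<delta> > 0" "Q 1" using delta_pos \<open>Q 1\<close> by simp_all
    show "Q v" if "cmod u = 1" "cmod v = 1" "cmod (v - u) < 2 * \<delta>" "Q u" for u v
      using limit_along_nearby_direction[of u P v] that unfolding Q_def by blast
  qed
  have "in_cone \<delta> (P - f z) d" if "d \<in> {1, -1}" for z d
  proof (rule in_cone_limit_fixed_direction[of "\<lambda>n. f (z + of_nat n * d) - f z"])
    show "(\<lambda>n. f (z + of_nat n * d) - f z) \<longlonglongrightarrow> P - f z"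
      using Q_def that \<open>Q 1\<close> \<open>Q (-1)\<close> by (intro tendsto_intros) auto
    show "in_cone \<delta> (f (z + of_nat n * d) - f z) d" for n
      using ray_in_cone[of 0 n z d] by simp
  qed
  then have "f z = P" for z
    using in_cone_two_directions[of \<delta> "P - f z" 1 "-1"] delta_pos by simp
  then show ?thesis by blast
qed


lemma Re_mono_on_real_axis:
  assumes "x \<le> y"
  shows "Re (f (of_real x)) \<le> Re (f (of_real y))"
proof -
  have "in_cone \<delta> (f (of_real y) - f (of_real x)) (of_real (y - x))"
    using cone[of "of_real y" "of_real x"] by simp
  then have "0 \<le> Re ((f (of_real y) - f (of_real x)) * cnj (of_real (y - x)))"
    using in_cone_Re_nonneg delta_pos by (meson less_imp_le)
  then have "0 \<le> (y - x) * Re (f (of_real y) - f (of_real x))" by (simp add: algebra_simps)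
  with assms show ?thesis by (cases "x = y") (auto simp: zero_le_mult_iff)
qed

(* f has a limit at p along every ray ending in p (monotone and bounded by f p). *)
lemma radial_convergent:
  assumes u: "cmod u = 1"
  shows "convergent (\<lambda>n. f (p + of_real (radius n) * u))"
proof (rule in_cone_chain_convergent[OF delta_pos _ _, of "-u"])
  show "cmod (-u) = 1" using u by simp
  show "in_cone \<delta> (f (p + of_real (radius m) * u) - f (p + of_real (radius n) * u)) (- u)"
    if "n \<le> m" for n m
  proof (cases "n = m")
    case False
    then have pos: "radius n - radius m > 0" using radius_strict_decreasing that by simp
    have e: "(p + of_real (radius m) * u) - (p + of_real (radius n) * u)
        = of_real (radius n - radius m) * (- u)"
      by (simp add: algebra_simps)
    show ?thesis using cone[of "p + of_real (radius m) * u" "p + of_real (radius n) * u"]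
      unfolding e in_cone_scale_iff[OF pos] .
  qed simp
  show "Re (f (p + of_real (radius n) * u) * cnj (- u)) \<le> Re (f p * cnj (- u))" for n
  proof -
    have "in_cone \<delta> (f (p + of_real (radius n) * u) - f p) u"
      using cone[of "p + of_real (radius n) * u" p] in_cone_scale_iff[OF radius_pos] by simp
    then have "0 \<le> Re ((f (p + of_real (radius n) * u) - f p) * cnj u)"
      using in_cone_Re_nonneg delta_pos by (meson less_imp_le)
    then show ?thesis by (simp add: algebra_simps)
  qed
qed

lemma radial_limits_in_cone:
  assumes lim_u: "(\<lambda>n. f (p + of_real (radius n) * u)) \<longlonglongrightarrow> L\<^sub>u"
    and lim_v: "(\<lambda>n. f (p + of_real (radius n) * v)) \<longlonglongrightarrow> L\<^sub>v"
  shows "in_cone \<delta> (L\<^sub>v - L\<^sub>u) v"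
proof (rule in_cone_limit_fixed_direction[of "\<lambda>m. f (p + of_real (radius m) * v) - L\<^sub>u"])
  show "(\<lambda>m. f (p + of_real (radius m) * v) - L\<^sub>u) \<longlonglongrightarrow> L\<^sub>v - L\<^sub>u"
    using lim_v by (intro tendsto_intros)
  fix m
  have "in_cone \<delta> (f (p + of_real (radius m) * v) - L\<^sub>u) (of_real (radius m) * v)"
  proof (rule in_cone_limit[of "\<lambda>n. f (p + of_real (radius m) * v) - f (p + of_real (radius n) * u)" _
        "\<lambda>n. of_real (radius m) * v - of_real (radius n) * u"])
    show "(\<lambda>n. f (p + of_real (radius m) * v) - f (p + of_real (radius n) * u))
        \<longlonglongrightarrow> f (p + of_real (radius m) * v) - L\<^sub>u"
      using lim_u by (intro tendsto_intros)
    have "(\<lambda>n. of_real (radius m) * v - of_real (radius n) * u) \<longlonglongrightarrow> of_real (radius m) * v - of_real 0 * u"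
      using radius_tendsto_zero by (intro tendsto_intros)
    then show "(\<lambda>n. of_real (radius m) * v - of_real (radius n) * u) \<longlonglongrightarrow> of_real (radius m) * v"
      by simp
    show "in_cone \<delta> (f (p + of_real (radius m) * v) - f (p + of_real (radius n) * u))
        (of_real (radius m) * v - of_real (radius n) * u)" for n
      using cone[of "p + of_real (radius m) * v" "p + of_real (radius n) * u"] by simp
  qed
  then show "in_cone \<delta> (f (p + of_real (radius m) * v) - L\<^sub>u) v"
    using in_cone_scale_iff[OF radius_pos] by blast
qed

(* Hence radial limits in nearby directions coincide, and by unit_circle_chain the radial
   limits from the left and from the right along the real axis agree. *)
lemma radial_limits_opposite:
  "lim (\<lambda>n. f (p + of_real (radius n) * (-1))) = lim (\<lambda>n. f (p + of_real (radius n) * 1))"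
proof -
  define L where "L u = lim (\<lambda>n. f (p + of_real (radius n) * u))" for u
  have lim: "(\<lambda>n. f (p + of_real (radius n) * u)) \<longlonglongrightarrow> L u" if "cmod u = 1" for u
    using radial_convergent[OF that, of p] unfolding L_def by (simp add: convergent_LIMSEQ_iff)
  have step: "L v = L 1" if "cmod u = 1" "cmod v = 1" "cmod (v - u) < 2 * \<delta>" "L u = L 1" for u v
  proof -
    have "in_cone \<delta> (L v - L u) v" by (rule radial_limits_in_cone[OF lim lim]) fact+
    moreover have "in_cone \<delta> (L u - L v) u" by (rule radial_limits_in_cone[OF lim lim]) fact+
    then have "in_cone \<delta> (L v - L u) (-u)" using in_cone_neg_iff[of \<delta> "L v - L u" "-u"] by simp
    ultimately have "L v - L u = 0" using in_cone_two_directions[of \<delta> "L v - L u" v "-u"] that by simp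
    then show ?thesis using \<open>L u = L 1\<close> by simp
  qed
  have "L (-1) = L 1"
    by (rule unit_circle_chain[of "2 * \<delta>" "\<lambda>u. L u = L 1"]) (use delta_pos step in auto)
  then show ?thesis by (simp add: L_def)
qed


(* Re f is continuous on the real axis: it is monotone with equal one-sided limits. *)
lemma Re_continuous_on_real_axis: "isCont (\<lambda>x. Re (f (of_real x))) x\<^sub>0"
proof -
  define h where "h x = Re (f (of_real x))" for x
  define L where "L = lim (\<lambda>n. f (of_real x\<^sub>0 + of_real (radius n) * 1))"
  have "(\<lambda>n. f (of_real x\<^sub>0 + of_real (radius n) * 1)) \<longlonglongrightarrow> L"
    using radial_convergent[of 1 "of_real x\<^sub>0"] unfolding L_def by (simp add: convergent_LIMSEQ_iff)
  from tendsto_Re[OF this] have right: "(\<lambda>n. h (x\<^sub>0 + radius n)) \<longlonglongrightarrow> Re L"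
    by (simp add: h_def)
  have "(\<lambda>n. f (of_real x\<^sub>0 + of_real (radius n) * (-1))) \<longlonglongrightarrow> L"
    using radial_convergent[of "-1" "of_real x\<^sub>0"] radial_limits_opposite[of "of_real x\<^sub>0"]
    unfolding L_def by (simp add: convergent_LIMSEQ_iff)
  from tendsto_Re[OF this] have left: "(\<lambda>n. h (x\<^sub>0 - radius n)) \<longlonglongrightarrow> Re L"
    by (simp add: h_def)
  have mono: "x \<le> y \<Longrightarrow> h x \<le> h y" for x y
    unfolding h_def by (rule Re_mono_on_real_axis)
  have "h (x\<^sub>0 - radius n) \<le> h x\<^sub>0" "h x\<^sub>0 \<le> h (x\<^sub>0 + radius n)" for n
    using radius_pos[of n] by (auto intro: mono)
  then have "Re L \<le> h x\<^sub>0" "h x\<^sub>0 \<le> Re L"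
    using left right by (auto intro: LIMSEQ_le_const2 LIMSEQ_le_const)
  then have "Re L = h x\<^sub>0" by simp
  have "\<exists>s>0. \<forall>x. x \<noteq> x\<^sub>0 \<and> norm (x - x\<^sub>0) < s \<longrightarrow> norm (h x - h x\<^sub>0) < e" if "e > 0" for e
  proof -
    have "\<forall>\<^sub>F n in sequentially. h (x\<^sub>0 + radius n) < h x\<^sub>0 + e \<and> h x\<^sub>0 - e < h (x\<^sub>0 - radius n)"
      using right left \<open>Re L = h x\<^sub>0\<close> \<open>e > 0\<close>
      by (auto simp: tendsto_iff dist_real_def intro!: eventually_conj elim!: eventually_mono)
    then obtain n where n: "h (x\<^sub>0 + radius n) < h x\<^sub>0 + e" "h x\<^sub>0 - e < h (x\<^sub>0 - radius n)"
      unfolding eventually_sequentially by blast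
    have "norm (h x - h x\<^sub>0) < e" if "norm (x - x\<^sub>0) < radius n" for x
    proof -
      have "x\<^sub>0 - radius n \<le> x" "x \<le> x\<^sub>0 + radius n" using that by auto
      then have "h (x\<^sub>0 - radius n) \<le> h x" "h x \<le> h (x\<^sub>0 + radius n)" by (auto intro: mono)
      with n show ?thesis by (simp add: abs_less_iff)
    qed
    then show ?thesis using radius_pos[of n] by blast
  qed
  then show ?thesis unfolding isCont_def LIM_eq h_def by blast
qed


lemma Re_unbounded_above_on_real_axis:
  assumes "\<not> (\<exists>c. \<forall>z. f z = c)"
  shows "\<exists>x. s \<le> Re (f (of_real x))"
proof (rule ccontr)
  assume "\<not> ?thesis"
  then have "Re (f (of_nat n)) \<le> s" for n
    by (metis linorder_le_cases of_real_of_nat_eq)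
  then show False using constant_if_bounded_on_naturals assms by blast
qed

(* For nonconstant f, Re f maps the real axis onto the reals: it is unbounded in both
   directions (below via point_reflection) and continuous. *)
lemma Re_surjective_on_real_axis:
  assumes nonconstant: "\<not> (\<exists>c. \<forall>z. f z = c)"
  shows "surj (\<lambda>x. Re (f (of_real x)))"
proof -
  interpret reflected: cone_map \<delta> "\<lambda>z. - f (- z)" by (rule point_reflection)
  have "\<not> (\<exists>c. \<forall>z. - f (- z) = c)"
    using nonconstant by (metis add.inverse_inverse)
  have "\<exists>x. Re (f (of_real x)) = s" for s
  proof -
    obtain x\<^sub>2 where x\<^sub>2: "s \<le> Re (f (of_real x\<^sub>2))"
      using Re_unbounded_above_on_real_axis[OF nonconstant] by blast
    obtain x where "- s \<le> Re (- f (- of_real x))"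
      using reflected.Re_unbounded_above_on_real_axis[OF \<open>\<not> (\<exists>c. \<forall>z. - f (- z) = c)\<close>] by blast
    then have x\<^sub>1: "Re (f (of_real (- x))) \<le> s" by simp
    show ?thesis
    proof (cases "- x \<le> x\<^sub>2")
      case True
      then show ?thesis
        using IVT[of "\<lambda>x. Re (f (of_real x))" "- x" s x\<^sub>2] x\<^sub>1 x\<^sub>2 Re_continuous_on_real_axis by blast
    next
      case False
      then have "Re (f (of_real x\<^sub>2)) \<le> Re (f (of_real (- x)))" by (intro Re_mono_on_real_axis) simp
      with x\<^sub>1 x\<^sub>2 have "Re (f (of_real x\<^sub>2)) = s" by simp
      then show ?thesis by blast
    qed
  qed
  then show ?thesis by (metis surjI)
qed

lemma Re_expansive_on_real_axis:
  "\<delta> * cmod (f (of_real x) - f (of_real y)) \<le> \<bar>Re (f (of_real x)) - Re (f (of_real y))\<bar>"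
proof (cases "x = y")
  case False
  have "in_cone \<delta> (f (of_real x) - f (of_real y)) (of_real (x - y))"
    using cone[of "of_real x" "of_real y"] by simp
  then have "\<delta> * cmod (f (of_real x) - f (of_real y)) * \<bar>x - y\<bar>
      \<le> (x - y) * (Re (f (of_real x)) - Re (f (of_real y)))"
    by (simp add: in_cone_def algebra_simps del: of_real_diff)
  also have "\<dots> \<le> \<bar>x - y\<bar> * \<bar>Re (f (of_real x)) - Re (f (of_real y))\<bar>"
    by (metis abs_ge_self abs_mult)
  finally show ?thesis using False by (simp add: mult.commute)
qed simp

end

lemma lipschitz_graph_of_expansive_curve:
  fixes \<phi> :: "real \<Rightarrow> complex"
  assumes surj: "surj (\<lambda>x. Re (\<phi> x))" and "C \<ge> 0"
    and expansive: "\<And>x y. cmod (\<phi> x - \<phi> y) \<le> C * \<bar>Re (\<phi> x) - Re (\<phi> y)\<bar>"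
  shows "\<exists>g. lipschitz_on C UNIV g \<and>
    range \<phi> = {complex_of_real s + \<i> * complex_of_real (g s) | s. True}"
proof -
  define g where "g s = Im (\<phi> (SOME x. Re (\<phi> x) = s))" for s
  have g_Re: "g (Re (\<phi> x)) = Im (\<phi> x)" for x
  proof -
    define y where "y = (SOME y. Re (\<phi> y) = Re (\<phi> x))"
    have "Re (\<phi> y) = Re (\<phi> x)" unfolding y_def by (rule someI) (rule refl)
    then have "\<phi> y = \<phi> x" using expansive[of y x] by simp
    then show ?thesis by (simp add: g_def y_def)
  qed
  have \<phi>_graph: "\<phi> x = of_real (Re (\<phi> x)) + \<i> * of_real (g (Re (\<phi> x)))" for x
    unfolding g_Re by (rule complex_eq)
  have "lipschitz_on C UNIV g"
    unfolding lipschitz_on_def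
  proof (intro conjI ballI)
    fix s t :: real
    obtain x y where "s = Re (\<phi> x)" "t = Re (\<phi> y)" using surj by (metis surjD)
    moreover have "\<bar>Im (\<phi> x - \<phi> y)\<bar> \<le> cmod (\<phi> x - \<phi> y)" by (rule abs_Im_le_cmod)
    ultimately show "dist (g s) (g t) \<le> C * dist s t"
      using expansive[of x y] by (simp add: dist_real_def g_Re)
  qed fact
  moreover have "range \<phi> = {complex_of_real s + \<i> * complex_of_real (g s) | s. True}"
  proof (intro equalityI subsetI)
    fix w assume "w \<in> range \<phi>"
    then show "w \<in> {complex_of_real s + \<i> * complex_of_real (g s) | s. True}" using \<phi>_graph by blast
  next
    fix w assume "w \<in> {complex_of_real s + \<i> * complex_of_real (g s) | s. True}"
    then obtain s where "w = of_real s + \<i> * of_real (g s)" by blast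
    moreover obtain x where "s = Re (\<phi> x)" using surj by (metis surjD)
    ultimately show "w \<in> range \<phi>" using \<phi>_graph by auto
  qed
  ultimately show ?thesis by blast
qed

lemma delta_monotone_real_image_is_lipschitz_graph:
  assumes "delta_monotone f" and nonconstant: "\<not> (\<exists>c. \<forall>z. f z = c)"
  shows "\<exists>g :: real \<Rightarrow> real. (\<exists>L. lipschitz_on L UNIV g) \<and>
    f ` range complex_of_real = {complex_of_real x + \<i> * complex_of_real (g x) | x. True}"
proof -
  obtain \<delta> where "\<delta> > 0" "\<And>p q. in_cone \<delta> (f p - f q) (p - q)"
    using assms(1) unfolding delta_monotone_iff_in_cone by blast
  then interpret cone_map \<delta> f by unfold_locales
  have "\<exists>g. lipschitz_on (1 / \<delta>) UNIV g \<and>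
      range (\<lambda>x. f (of_real x)) = {complex_of_real s + \<i> * complex_of_real (g s) | s. True}"
  proof (rule lipschitz_graph_of_expansive_curve)
    show "surj (\<lambda>x. Re (f (of_real x)))" by (rule Re_surjective_on_real_axis[OF nonconstant])
    show "1 / \<delta> \<ge> 0" using delta_pos by simp
    show "cmod (f (of_real x) - f (of_real y)) \<le> 1 / \<delta> * \<bar>Re (f (of_real x)) - Re (f (of_real y))\<bar>"
      for x y using Re_expansive_on_real_axis[of x y] delta_pos by (simp add: field_simps)
  qed
  moreover have "f ` range complex_of_real = range (\<lambda>x. f (of_real x))" by (rule image_image)
  ultimately show ?thesis by auto
qed

lemma shear_quadratic_estimate:
  fixes a b c L :: real
  assumes L: "L \<ge> 0" and b: "\<bar>b\<bar> \<le> L * \<bar>a\<bar>"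
  shows "(\<bar>a\<bar> + \<bar>c\<bar>)^2 \<le> 4 * (a * a + (b + (L^2 + 1) * c) * c)"
proof -
  have "\<bar>b\<bar> * \<bar>c\<bar> \<le> L * \<bar>a\<bar> * \<bar>c\<bar>" using b by (rule mult_right_mono) simp
  then have bc: "- (L * \<bar>a\<bar> * \<bar>c\<bar>) \<le> b * c" by (simp add: abs_mult abs_le_iff flip: abs_mult)
  have "0 \<le> (\<bar>a\<bar> - L * \<bar>c\<bar>)^2" "0 \<le> (\<bar>a\<bar> - \<bar>c\<bar>)^2" by simp_all
  then have "2 * (L * \<bar>a\<bar> * \<bar>c\<bar>) \<le> a * a + L^2 * (c * c)" "(\<bar>a\<bar> + \<bar>c\<bar>)^2 \<le> 2 * (a * a + c * c)"
    by (simp_all add: power2_eq_square algebra_simps abs_mult_self_eq)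
  moreover have "0 \<le> L^2 * (c * c)" "0 \<le> c * c" by simp_all
  moreover have "(b + (L^2 + 1) * c) * c = b * c + L^2 * (c * c) + c * c" by (simp add: algebra_simps)
  ultimately show ?thesis using bc by (smt (verit))
qed

lemma complex_Re_mult_cnj: "Re (x * cnj y) = Re x * Re y + Im x * Im y"
  by simp

lemma shear_along_lipschitz_graph_in_cone:
  fixes g :: "real \<Rightarrow> real"
  assumes lip: "lipschitz_on L UNIV g"
  defines "K \<equiv> L^2 + 1"
  defines "F \<equiv> \<lambda>z. complex_of_real (Re z) + \<i> * complex_of_real (g (Re z) + K * Im z)"
  shows "in_cone (1 / (4 * (1 + L + K))) (F z - F w) (z - w)"
proof -
  have L: "L \<ge> 0" and g_lip: "\<bar>g x - g y\<bar> \<le> L * \<bar>x - y\<bar>" for x y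
    using lip unfolding lipschitz_on_def dist_real_def by auto
  define a where "a = Re z - Re w"
  define c where "c = Im z - Im w"
  define b where "b = g (Re z) - g (Re w)"
  have ReF: "Re (F z - F w) = a" and ImF: "Im (F z - F w) = b + K * c"
    by (simp_all add: F_def a_def b_def c_def algebra_simps)
  have Re_d: "Re (z - w) = a" and Im_d: "Im (z - w) = c" by (simp_all add: a_def c_def)
  have b_bound: "\<bar>b\<bar> \<le> L * \<bar>a\<bar>" using g_lip by (simp add: a_def b_def)
  have K_pos: "1 + L + K > 0" using L by (simp add: K_def add_pos_nonneg)
  have "cmod (F z - F w) \<le> \<bar>a\<bar> + \<bar>b + K * c\<bar>"
    using cmod_le[of "F z - F w"] unfolding ReF ImF .
  also have "\<dots> \<le> \<bar>a\<bar> + L * \<bar>a\<bar> + K * \<bar>c\<bar>"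
    using b_bound abs_triangle_ineq[of b "K * c"] by (simp add: abs_mult K_def)
  also have "\<dots> \<le> (1 + L + K) * (\<bar>a\<bar> + \<bar>c\<bar>)"
    using L by (simp add: algebra_simps K_def)
  finally have F_bound: "cmod (F z - F w) \<le> (1 + L + K) * (\<bar>a\<bar> + \<bar>c\<bar>)" .
  have d_bound: "cmod (z - w) \<le> \<bar>a\<bar> + \<bar>c\<bar>" using cmod_le[of "z - w"] unfolding Re_d Im_d .
  have "cmod (F z - F w) * cmod (z - w) \<le> (1 + L + K) * (\<bar>a\<bar> + \<bar>c\<bar>)^2"
    using mult_mono[OF F_bound d_bound] K_pos by (simp add: power2_eq_square mult.assoc)
  also have "\<dots> \<le> (1 + L + K) * (4 * (a * a + (b + K * c) * c))"
    using shear_quadratic_estimate[OF L b_bound, of c] K_pos by (simp add: K_def)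
  also have "a * a + (b + K * c) * c = Re ((F z - F w) * cnj (z - w))"
    using complex_Re_mult_cnj[of "F z - F w" "z - w"] unfolding ReF ImF Re_d Im_d by simp
  finally show ?thesis unfolding in_cone_def using K_pos by (simp add: field_simps)
qed

lemma lipschitz_graph_is_delta_monotone_real_image:
  fixes g :: "real \<Rightarrow> real"
  assumes lip: "lipschitz_on L UNIV g"
  shows "\<exists>f. delta_monotone f \<and> \<not> (\<exists>c. \<forall>z. f z = c) \<and>
    f ` range complex_of_real = {complex_of_real x + \<i> * complex_of_real (g x) | x. True}"
proof -
  define K where "K = L^2 + 1"
  define F where "F z = complex_of_real (Re z) + \<i> * complex_of_real (g (Re z) + K * Im z)" for z
  have "L \<ge> 0" using lip by (simp add: lipschitz_on_def)
  then have "1 / (4 * (1 + L + K)) > 0" by (simp add: K_def add_pos_nonneg)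
  then have "delta_monotone F"
    unfolding delta_monotone_iff_in_cone F_def K_def
    using shear_along_lipschitz_graph_in_cone[OF lip] by blast
  moreover have "F \<i> \<noteq> F 0"
    by (simp add: F_def K_def complex_eq_iff) (smt (verit) zero_le_power2)
  then have "\<not> (\<exists>c. \<forall>z. F z = c)" by metis
  moreover have "F ` range complex_of_real = {complex_of_real x + \<i> * complex_of_real (g x) | x. True}"
    by (auto simp: F_def image_iff)
  ultimately show ?thesis by blast
qed

theorem proposition1p5:
  fixes \<Gamma> :: "complex set"
  shows "(\<exists>f. delta_monotone f \<and> \<not> (\<exists>c. \<forall>z. f z = c) \<and> \<Gamma> = f ` (complex_of_real ` UNIV))
     \<longleftrightarrow> (\<exists>g :: real \<Rightarrow> real. (\<exists>L. lipschitz_on L UNIV g) \<and>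
            \<Gamma> = {complex_of_real x + \<i> * complex_of_real (g x) | x. True})"
proof
  assume "\<exists>f. delta_monotone f \<and> \<not> (\<exists>c. \<forall>z. f z = c) \<and> \<Gamma> = f ` (complex_of_real ` UNIV)"
  then obtain f where "delta_monotone f" "\<not> (\<exists>c. \<forall>z. f z = c)" "\<Gamma> = f ` range complex_of_real"
    by blast
  then show "\<exists>g :: real \<Rightarrow> real. (\<exists>L. lipschitz_on L UNIV g) \<and>
      \<Gamma> = {complex_of_real x + \<i> * complex_of_real (g x) | x. True}"
    using delta_monotone_real_image_is_lipschitz_graph by simp
next
  assume "\<exists>g :: real \<Rightarrow> real. (\<exists>L. lipschitz_on L UNIV g) \<and>
      \<Gamma> = {complex_of_real x + \<i> * complex_of_real (g x) | x. True}"
  then obtain g L where lip: "lipschitz_on L UNIV g"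
    and \<Gamma>: "\<Gamma> = {complex_of_real x + \<i> * complex_of_real (g x) | x. True}"
    by blast
  obtain f where "delta_monotone f" "\<not> (\<exists>c. \<forall>z. f z = c)"
    and "f ` range complex_of_real = {complex_of_real x + \<i> * complex_of_real (g x) | x. True}"
    using lipschitz_graph_is_delta_monotone_real_image[OF lip] by blast
  then show "\<exists>f. delta_monotone f \<and> \<not> (\<exists>c. \<forall>z. f z = c) \<and> \<Gamma> = f ` (complex_of_real ` UNIV)"
    unfolding \<Gamma> by blast
qed

end
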